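(* Let $F$ be a Fano manifold and let $\lambda$ be an eigenvalue of $(c_1(F)\star_0)$ on $H^{(0)}$ of multiplicity one. Then $\lambda$ is not an eigenvalue of $(c_1(F)\star_0)$ on $H^{(j)}$ for any $j\neq0$.
   Context: $\star_0$ is the small quantum product on the full cohomology $H^\bullet(F,\mathbb C)$ (supercommutative, with Poincaré pairing $(\cdot,\cdot)$ satisfying the Frobenius property). $H^{(j)}=\bigoplus_{p-q=j}H^{p,q}(F)$; each $H^{(j)}$ is preserved by $(c_1(F)\star_0)$ and $H^{(j)}\star_0H^{(k)}\subset H^{(j+k)}$. *)

theory Defs
  imports Main Complex_Main
begin

text \<open>The cohomology H is a complex vector space
  (carrier type 'v, scalar multiplication sc); mult is the small quantum product,
  one its unit, pair the Poincare pairing, Hj j the subspace H^(j), and c the class c_1(F).\<close>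

definition fin_dim_cvs :: "(complex \<Rightarrow> 'v::ab_group_add \<Rightarrow> 'v) \<Rightarrow> bool" where
  "fin_dim_cvs sc \<longleftrightarrow> vector_space sc \<and> (\<exists>B. finite B \<and> module.span sc B = UNIV)"

definition bilinear_map :: "(complex \<Rightarrow> 'v::ab_group_add \<Rightarrow> 'v) \<Rightarrow> ('v \<Rightarrow> 'v \<Rightarrow> 'v) \<Rightarrow> bool" where
  "bilinear_map sc m \<longleftrightarrow>
     (\<forall>x y z. m (x + y) z = m x z + m y z \<and> m x (y + z) = m x y + m x z) \<and>
     (\<forall>a x y. m (sc a x) y = sc a (m x y) \<and> m x (sc a y) = sc a (m x y))"

definition bilinear_form :: "(complex \<Rightarrow> 'v::ab_group_add \<Rightarrow> 'v) \<Rightarrow> ('v \<Rightarrow> 'v \<Rightarrow> complex) \<Rightarrow> bool" where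
  "bilinear_form sc p \<longleftrightarrow>
     (\<forall>x y z. p (x + y) z = p x z + p y z \<and> p x (y + z) = p x y + p x z) \<and>
     (\<forall>a x y. p (sc a x) y = a * p x y \<and> p x (sc a y) = a * p x y)"

definition direct_sum_decomp :: "(complex \<Rightarrow> 'v::ab_group_add \<Rightarrow> 'v) \<Rightarrow> (int \<Rightarrow> 'v set) \<Rightarrow> bool" where
  "direct_sum_decomp sc Hj \<longleftrightarrow>
     (\<forall>j. module.subspace sc (Hj j)) \<and>
     (\<forall>v. \<exists>!comp. (\<forall>j. comp j \<in> Hj j) \<and> finite {j. comp j \<noteq> 0} \<and>
                    v = sum comp {j. comp j \<noteq> 0})"

text \<open>All structural properties of (H^\<bullet>(F,C), star_0, ( , ), H^(j), c_1(F)) used in the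
  statement: finite-dimensional complex vector space, associative unital bilinear product,
  supercommutativity (an element of H^(j) has cohomological parity j mod 2, since p-q and p+q
  have the same parity), nondegenerate Poincare pairing with the Frobenius property,
  pairing H^(j) x H^(k) -> 0 unless j+k=0, grading H^(j) star H^(k) in H^(j+k),
  unit and c_1(F) lying in H^(0) = H^(1,1)-containing part.\<close>
definition qcoh_data ::
  "(complex \<Rightarrow> 'v::ab_group_add \<Rightarrow> 'v) \<Rightarrow> ('v \<Rightarrow> 'v \<Rightarrow> 'v) \<Rightarrow> 'v \<Rightarrow>
   ('v \<Rightarrow> 'v \<Rightarrow> complex) \<Rightarrow> (int \<Rightarrow> 'v set) \<Rightarrow> 'v \<Rightarrow> bool" where
  "qcoh_data sc mult one pair Hj c \<longleftrightarrow>
     fin_dim_cvs sc \<and>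
     bilinear_map sc mult \<and>
     (\<forall>x y z. mult (mult x y) z = mult x (mult y z)) \<and>
     (\<forall>x. mult one x = x \<and> mult x one = x) \<and>
     direct_sum_decomp sc Hj \<and>
     (\<forall>j k x y. x \<in> Hj j \<longrightarrow> y \<in> Hj k \<longrightarrow> mult x y = sc ((-1) ^ nat \<bar>j * k\<bar>) (mult y x)) \<and>
     (\<forall>j k x y. x \<in> Hj j \<longrightarrow> y \<in> Hj k \<longrightarrow> mult x y \<in> Hj (j + k)) \<and>
     bilinear_form sc pair \<and>
     (\<forall>x. (\<forall>y. pair x y = 0) \<longrightarrow> x = 0) \<and>
     (\<forall>y. (\<forall>x. pair x y = 0) \<longrightarrow> y = 0) \<and>
     (\<forall>x y z. pair (mult x y) z = pair x (mult y z)) \<and>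
     (\<forall>j k x y. x \<in> Hj j \<longrightarrow> y \<in> Hj k \<longrightarrow> j + k \<noteq> 0 \<longrightarrow> pair x y = 0) \<and>
     one \<in> Hj 0 \<and> c \<in> Hj 0"

definition qmul_op :: "('v \<Rightarrow> 'v \<Rightarrow> 'v) \<Rightarrow> 'v \<Rightarrow> 'v \<Rightarrow> 'v" where
  "qmul_op mult c = (\<lambda>v. mult c v)"

definition is_eigenvalue_on ::
  "(complex \<Rightarrow> 'v::ab_group_add \<Rightarrow> 'v) \<Rightarrow> ('v \<Rightarrow> 'v) \<Rightarrow> 'v set \<Rightarrow> complex \<Rightarrow> bool" where
  "is_eigenvalue_on sc L W lam \<longleftrightarrow> (\<exists>v \<in> W. v \<noteq> 0 \<and> L v = sc lam v)"

definition eig_multiplicity ::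
  "(complex \<Rightarrow> 'v::ab_group_add \<Rightarrow> 'v) \<Rightarrow> ('v \<Rightarrow> 'v) \<Rightarrow> 'v set \<Rightarrow> complex \<Rightarrow> nat" where
  "eig_multiplicity sc L W lam =
     vector_space.dim sc {v \<in> W. \<exists>k. ((\<lambda>w. L w - sc lam w) ^^ k) v = 0}"

end

theory Submission
  imports Defs "HOL-Computational_Algebra.Polynomial"
begin

text \<open>Let v in H^(j), j \<noteq> 0, satisfy c \<star> v = \<lambda> v. By nondegeneracy of the pairing there is
  w in H^(-j) with (v, w) \<noteq> 0; then u = v \<star> w is a \<lambda>-eigenvector in H^(0), nonzero because
  (1, u) = (v, w). The powers v^k lie in the pairwise different summands H^(kj), so finite
  dimensionality forces v, and with it u (as u^k = v^k \<star> w^k), to be nilpotent. On the other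
  hand, write an annihilating polynomial of n = c - \<lambda> as X^m Q with Q(0) \<noteq> 0. Then e = Q(n)
  lies in the generalized \<lambda>-eigenspace of H^(0) and e^k \<star> u = Q(0)^k u \<noteq> 0; as that
  eigenspace is a line, u is a nonzero multiple of the non-nilpotent e.\<close>

context vector_space
begin

lemma finite_dim_family_dependent:
  assumes "finite B" and "span B = UNIV"
  obtains t where "\<exists>i\<le>card B. t i \<noteq> 0" and "(\<Sum>i\<le>card B. t i *s f i) = 0"
proof (cases "inj_on f {..card B}")
  case True
  have "\<not> independent (f ` {..card B})"
  proof
    assume "independent (f ` {..card B})"
    then have "card (f ` {..card B}) \<le> card B"
      using independent_span_bound[OF assms(1)] assms(2) by blast
    then show False by (simp add: card_image[OF True])
  qed
  then obtain u where "\<exists>x\<in>f ` {..card B}. u x \<noteq> 0" and "(\<Sum>x\<in>f ` {..card B}. u x *s x) = 0"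
    using dependent_finite by blast
  then show thesis using that[of "u \<circ> f"] by (auto simp: sum.reindex[OF True])
next
  case False
  then obtain i k where ik: "i \<le> card B" "k \<le> card B" "i \<noteq> k" "f i = f k"
    by (auto simp: inj_on_def)
  let ?t = "\<lambda>l. if l = i then 1 else if l = k then -1 else 0"
  have "(\<Sum>l\<le>card B. ?t l *s f l) = (\<Sum>l\<in>{i, k}. ?t l *s f l)"
    by (rule sum.mono_neutral_right) (use ik in auto)
  also have "\<dots> = 0" using ik by simp
  finally show thesis by (rule that[rotated]) (use ik in auto)
qed

lemma dim_eq_1_proportional:
  assumes "dim S = 1" and "x \<in> S" "y \<in> S" "y \<noteq> 0"
  obtains a where "x = a *s y"
proof -
  obtain C where "C \<subseteq> S" "S \<subseteq> span C" "card C = 1"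
    using basis_exists assms(1) by metis
  then obtain b where "S \<subseteq> range (\<lambda>a. a *s b)"
    by (auto simp: card_1_singleton_iff span_singleton)
  then obtain s t where st: "x = s *s b" "y = t *s b"
    using assms(2,3) by blast
  then have "t \<noteq> 0" using assms(4) by auto
  with st have "x = (s / t) *s y" by simp
  then show thesis by (rule that)
qed

end

locale unital_algebra = vector_space scale
  for scale :: "'a::field \<Rightarrow> 'v::ab_group_add \<Rightarrow> 'v" (infixr \<open>*s\<close> 75) +
  fixes mult :: "'v \<Rightarrow> 'v \<Rightarrow> 'v" (infixl \<open>\<star>\<close> 70) and one :: 'v
  assumes add_mult: "(x + y) \<star> z = x \<star> z + y \<star> z"
    and mult_add: "x \<star> (y + z) = x \<star> y + x \<star> z"
    and scale_mult: "(a *s x) \<star> y = a *s (x \<star> y)"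
    and mult_scale: "x \<star> (a *s y) = a *s (x \<star> y)"
    and mult_assoc: "(x \<star> y) \<star> z = x \<star> (y \<star> z)"
    and one_mult: "one \<star> x = x"
    and mult_one: "x \<star> one = x"
begin

lemma zero_mult [simp]: "0 \<star> x = 0"
  using add_mult[of 0 0 x] by simp

lemma mult_zero [simp]: "x \<star> 0 = 0"
  using mult_add[of x 0 0] by simp

lemma diff_mult: "(x - y) \<star> z = x \<star> z - y \<star> z"
  using add_mult[of "x - y" y z] by (simp add: eq_diff_eq)

definition mpow :: "'v \<Rightarrow> nat \<Rightarrow> 'v" where
  "mpow x k = ((\<star>) x ^^ k) one"

lemma mpow_0 [simp]: "mpow x 0 = one"
  and mpow_Suc: "mpow x (Suc k) = x \<star> mpow x k"
  by (simp_all add: mpow_def)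

lemma funpow_mult_eq_mpow_mult: "((\<star>) x ^^ k) y = mpow x k \<star> y"
  by (induction k) (simp_all add: mpow_Suc one_mult mult_assoc)

lemma mpow_Suc_right: "mpow x (Suc k) = mpow x k \<star> x"
proof (induction k)
  case (Suc k)
  then have "mpow x (Suc (Suc k)) = x \<star> (mpow x k \<star> x)" by (simp add: mpow_Suc)
  then show ?case by (simp add: mpow_Suc mult_assoc)
qed (simp add: mpow_Suc one_mult mult_one)

lemma mpow_scale: "mpow (a *s x) k = a ^ k *s mpow x k"
  by (induction k) (simp_all add: mpow_Suc scale_mult mult_scale)

lemma mpow_mult_distrib:
  assumes "\<And>k. (x \<star> y) \<star> mpow x k = mpow x k \<star> (x \<star> y)"
  shows "mpow (x \<star> y) k = mpow x k \<star> mpow y k"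
proof (induction k)
  case (Suc k)
  have "mpow (x \<star> y) (Suc k) = ((x \<star> y) \<star> mpow x k) \<star> mpow y k"
    by (simp add: mpow_Suc Suc.IH mult_assoc)
  also have "\<dots> = ((mpow x k \<star> x) \<star> y) \<star> mpow y k"
    by (simp only: assms) (simp add: mult_assoc)
  also have "\<dots> = mpow x (Suc k) \<star> mpow y (Suc k)"
    by (simp add: mpow_Suc_right[of x] mpow_Suc[of y] mult_assoc)
  finally show ?case .
qed (simp add: one_mult)

definition poly_eval :: "'v \<Rightarrow> 'a poly \<Rightarrow> 'v" where
  "poly_eval x p = fold_coeffs (\<lambda>a y. a *s one + x \<star> y) p 0"

lemma poly_eval_0 [simp]: "poly_eval x 0 = 0"
  by (simp add: poly_eval_def)

lemma poly_eval_pCons [simp]: "poly_eval x (pCons a p) = a *s one + x \<star> poly_eval x p"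
  by (cases "p = 0 \<and> a = 0") (auto simp: poly_eval_def)

lemma poly_eval_add: "poly_eval x (p + q) = poly_eval x p + poly_eval x q"
proof (induction p arbitrary: q rule: pCons_induct)
  case (pCons a p)
  then show ?case
    by (cases q rule: pCons_cases) (simp add: mult_add scale_left_distrib add_ac)
qed simp

lemma poly_eval_smult: "poly_eval x (smult a p) = a *s poly_eval x p"
  by (induction p rule: pCons_induct) (simp_all add: scale_right_distrib mult_scale)

lemma poly_eval_mult: "poly_eval x (p * q) = poly_eval x p \<star> poly_eval x q"
  by (induction p rule: pCons_induct)
    (simp_all add: poly_eval_add poly_eval_smult add_mult scale_mult one_mult mult_assoc)

lemma poly_eval_power: "poly_eval x (p ^ k) = mpow (poly_eval x p) k"
  by (induction k) (simp_all add: one_pCons mpow_Suc poly_eval_mult)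

lemma poly_eval_monom: "poly_eval x (monom a k) = a *s mpow x k"
proof -
  have "poly_eval x [:0, 1:] = x" by (simp add: mult_one)
  then show ?thesis by (simp add: monom_altdef poly_eval_smult poly_eval_power)
qed

lemma poly_eval_sum: "poly_eval x (\<Sum>i\<in>I. p i) = (\<Sum>i\<in>I. poly_eval x (p i))"
  by (induction I rule: infinite_finite_induct) (simp_all add: poly_eval_add)

lemma poly_eval_mult_null_vector:
  assumes "x \<star> e = 0"
  shows "poly_eval x p \<star> e = poly p 0 *s e"
  by (induction p rule: pCons_induct)
    (simp_all add: add_mult scale_mult mult_scale one_mult mult_assoc assms)

lemma annihilating_poly_exists:
  assumes "finite B" and "span B = UNIV"
  obtains P where "P \<noteq> 0" and "poly_eval x P = 0"
proof -
  obtain t where t: "\<exists>i\<le>card B. t i \<noteq> 0" "(\<Sum>i\<le>card B. t i *s mpow x i) = 0"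
    using finite_dim_family_dependent[OF assms] .
  define P where "P = (\<Sum>i\<le>card B. monom (t i) i)"
  have "P \<noteq> 0" using t(1) coeff_sum_monom[of _ "card B" t] by (metis P_def coeff_0)
  moreover have "poly_eval x P = 0"
    using t(2) by (simp add: P_def poly_eval_sum poly_eval_monom)
  ultimately show thesis by (rule that)
qed

lemma non_nilpotent_in_generalized_kernel:
  assumes "finite B" and "span B = UNIV" and "x \<star> e = 0" and "e \<noteq> 0"
  obtains Q m where "((\<star>) x ^^ m) (poly_eval x Q) = 0" and "\<And>k. mpow (poly_eval x Q) k \<noteq> 0"
proof -
  obtain P where "P \<noteq> 0" and P: "poly_eval x P = 0"
    using annihilating_poly_exists[OF assms(1,2)] .
  then obtain Q where PQ: "P = [:0, 1:] ^ order 0 P * Q" and "\<not> [:0, 1:] dvd Q"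
    using order_decomp[of P 0] by auto
  then have Q0: "poly Q 0 \<noteq> 0" by (simp add: poly_eq_0_iff_dvd)
  have "((\<star>) x ^^ order 0 P) (poly_eval x Q) = poly_eval x P"
    by (subst PQ) (simp add: funpow_mult_eq_mpow_mult poly_eval_mult poly_eval_power mult_one)
  moreover have "mpow (poly_eval x Q) k \<noteq> 0" for k
  proof
    assume "mpow (poly_eval x Q) k = 0"
    then have "poly (Q ^ k) 0 *s e = 0"
      using poly_eval_mult_null_vector[OF assms(3), of "Q ^ k"] by (simp add: poly_eval_power)
    then show False using Q0 assms(4) by simp
  qed
  ultimately show thesis using P that by auto
qed

end

lemma direct_sum_decomp_component_eq_0:
  fixes sc :: "complex \<Rightarrow> 'v::ab_group_add \<Rightarrow> 'v"
  assumes "vector_space sc" and decomp: "direct_sum_decomp sc Hj" and I: "finite I" "inj_on g I"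
    and z: "\<And>i. i \<in> I \<Longrightarrow> z i \<in> Hj (g i)" and sum: "sum z I = 0" and "i \<in> I"
  shows "z i = 0"
proof -
  define decomposes_0 where
    "decomposes_0 h \<longleftrightarrow> (\<forall>j. h j \<in> Hj j) \<and> finite {j. h j \<noteq> 0} \<and> 0 = sum h {j. h j \<noteq> 0}"
    for h :: "int \<Rightarrow> 'v"
  define comp where "comp d = (if d \<in> g ` I then z (the_inv_into I g d) else 0)" for d
  have comp_g: "comp (g i) = z i" if "i \<in> I" for i
    using that I(2) by (simp add: comp_def the_inv_into_f_f)
  have Hj_0: "0 \<in> Hj d" for d
    using decomp module.subspace_0[OF \<open>vector_space sc\<close>[folded module_iff_vector_space]]
    by (simp add: direct_sum_decomp_def)
  have comp_Hj: "comp d \<in> Hj d" for d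
    using z comp_g Hj_0 by (cases "d \<in> g ` I") (auto simp: comp_def)
  have supp: "{d. comp d \<noteq> 0} \<subseteq> g ` I" by (auto simp: comp_def split: if_splits)
  then have "sum comp {d. comp d \<noteq> 0} = sum comp (g ` I)"
    using I(1) by (intro sum.mono_neutral_left) auto
  also have "\<dots> = 0" using sum comp_g by (simp add: sum.reindex[OF I(2)])
  finally have "decomposes_0 comp"
    using comp_Hj finite_subset[OF supp finite_imageI[OF I(1)]] by (simp add: decomposes_0_def)
  moreover have "decomposes_0 (\<lambda>_. 0)" using Hj_0 by (simp add: decomposes_0_def)
  moreover have "\<exists>!h. decomposes_0 h"
    using decomp unfolding direct_sum_decomp_def decomposes_0_def by (elim conjE allE)
  ultimately have "comp = (\<lambda>_. 0)" by blast
  then show ?thesis using comp_g[OF \<open>i \<in> I\<close>] by simp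
qed

locale quantum_cohomology =
  fixes sc :: "complex \<Rightarrow> 'v::ab_group_add \<Rightarrow> 'v"
    and mult :: "'v \<Rightarrow> 'v \<Rightarrow> 'v" and one :: 'v
    and pair :: "'v \<Rightarrow> 'v \<Rightarrow> complex" and Hj :: "int \<Rightarrow> 'v set" and c :: 'v
  assumes qcoh_data: "qcoh_data sc mult one pair Hj c"
begin

sublocale unital_algebra sc mult one
  using qcoh_data unfolding qcoh_data_def fin_dim_cvs_def bilinear_map_def
  by (intro unital_algebra.intro unital_algebra_axioms.intro) auto

lemma finite_spanning_set: "\<exists>B. finite B \<and> span B = UNIV"
  using qcoh_data unfolding qcoh_data_def fin_dim_cvs_def by (elim conjE)

lemma Hj_direct_sum: "direct_sum_decomp sc Hj"
  using qcoh_data unfolding qcoh_data_def by (elim conjE)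

lemma one_in_H0: "one \<in> Hj 0"
  using qcoh_data unfolding qcoh_data_def by (elim conjE)

lemma c_in_H0: "c \<in> Hj 0"
  using qcoh_data unfolding qcoh_data_def by (elim conjE)

lemma mult_Hj: "x \<in> Hj j \<Longrightarrow> y \<in> Hj k \<Longrightarrow> mult x y \<in> Hj (j + k)"
  using qcoh_data unfolding qcoh_data_def by (elim conjE) blast

lemma pair_nondegenerate: "x \<noteq> 0 \<Longrightarrow> \<exists>y. pair x y \<noteq> 0"
  using qcoh_data unfolding qcoh_data_def by (elim conjE) metis

lemma pair_frobenius: "pair (mult x y) z = pair x (mult y z)"
  using qcoh_data unfolding qcoh_data_def by (elim conjE) blast

lemma pair_orthogonal: "x \<in> Hj j \<Longrightarrow> y \<in> Hj k \<Longrightarrow> j + k \<noteq> 0 \<Longrightarrow> pair x y = 0"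
  using qcoh_data unfolding qcoh_data_def by (elim conjE) metis

lemma Hj_subspace: "subspace (Hj j)"
  using Hj_direct_sum by (simp add: direct_sum_decomp_def)

lemma mult_commute_H0:
  assumes "x \<in> Hj 0" and "y \<in> Hj k"
  shows "mult x y = mult y x"
proof -
  have "\<forall>j k x y. x \<in> Hj j \<longrightarrow> y \<in> Hj k \<longrightarrow> mult x y = sc ((-1) ^ nat \<bar>j * k\<bar>) (mult y x)"
    using qcoh_data unfolding qcoh_data_def by (elim conjE)
  then have "mult x y = sc ((-1) ^ nat \<bar>0 * k\<bar>) (mult y x)" using assms by blast
  then show ?thesis by simp
qed

lemma pair_add_right: "pair x (y + z) = pair x y + pair x z"
  using qcoh_data by (simp add: qcoh_data_def bilinear_form_def)

lemma pair_zero_right [simp]: "pair x 0 = 0"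
  using pair_add_right[of x 0 0] by simp

lemma pair_sum_right: "pair x (\<Sum>i\<in>I. y i) = (\<Sum>i\<in>I. pair x (y i))"
  by (induction I rule: infinite_finite_induct) (simp_all add: pair_add_right)

lemma mpow_in_Hj:
  assumes "x \<in> Hj j"
  shows "mpow x k \<in> Hj (int k * j)"
proof (induction k)
  case (Suc k)
  then have "mult x (mpow x k) \<in> Hj (j + int k * j)" by (rule mult_Hj[OF assms])
  then show ?case by (simp add: mpow_Suc algebra_simps)
qed (simp add: one_in_H0)

lemma poly_eval_in_H0:
  assumes "x \<in> Hj 0"
  shows "poly_eval x p \<in> Hj 0"
proof (induction p rule: pCons_induct)
  case (pCons a p)
  have "mult x (poly_eval x p) \<in> Hj 0" using mult_Hj[OF assms pCons.IH] by simp
  then show ?case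
    using one_in_H0 by (simp add: subspace_add[OF Hj_subspace] subspace_scale[OF Hj_subspace])
qed (simp add: subspace_0[OF Hj_subspace])

lemma nilpotent_of_nonzero_degree:
  assumes "x \<in> Hj j" and "j \<noteq> 0"
  obtains k where "mpow x k = 0"
proof -
  obtain B where B: "finite B" "span B = UNIV" using finite_spanning_set by blast
  obtain t where t: "\<exists>i\<le>card B. t i \<noteq> 0" "(\<Sum>i\<le>card B. sc (t i) (mpow x i)) = 0"
    using finite_dim_family_dependent[OF B] .
  have inj: "inj_on (\<lambda>i. int i * j) {..card B}" using assms(2) by (auto simp: inj_on_def)
  have "sc (t i) (mpow x i) = 0" if "i \<le> card B" for i
    using vector_space_axioms Hj_direct_sum finite_atMost inj _ t(2)
  proof (rule direct_sum_decomp_component_eq_0)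
    show "sc (t i) (mpow x i) \<in> Hj (int i * j)" for i
      using mpow_in_Hj[OF assms(1)] by (rule subspace_scale[OF Hj_subspace])
  qed (use that in simp)
  then show thesis using t(1) that by auto
qed

lemma pairing_partner:
  assumes "v \<in> Hj j" and "v \<noteq> 0"
  obtains w where "w \<in> Hj (- j)" and "pair v w \<noteq> 0"
proof -
  obtain y where y: "pair v y \<noteq> 0" using pair_nondegenerate assms(2) by blast
  obtain comp where comp: "\<And>k. comp k \<in> Hj k" "y = (\<Sum>k\<in>{k. comp k \<noteq> 0}. comp k)"
    using Hj_direct_sum unfolding direct_sum_decomp_def by blast
  then obtain k where k: "pair v (comp k) \<noteq> 0"
    using y by (metis pair_sum_right sum.neutral)
  then have "k = - j" using pair_orthogonal[OF assms(1) comp(1)] by force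
  then show thesis using that comp(1) k by blast
qed

lemma simple_eigenvector_not_nilpotent:
  assumes simple: "eig_multiplicity sc (qmul_op mult c) (Hj 0) lam = 1"
    and u: "u \<in> Hj 0" "u \<noteq> 0" "mult c u = sc lam u"
  shows "mpow u k \<noteq> 0"
proof -
  define n where "n = c - sc lam one"
  have n_H0: "n \<in> Hj 0"
    using c_in_H0 one_in_H0
    by (simp add: n_def subspace_diff[OF Hj_subspace] subspace_scale[OF Hj_subspace])
  have mult_n: "mult n x = mult c x - sc lam x" for x
    by (simp add: n_def diff_mult scale_mult one_mult)
  define K where "K = {x \<in> Hj 0. \<exists>m. (mult n ^^ m) x = 0}"
  have "(\<lambda>x. qmul_op mult c x - sc lam x) = mult n" by (simp add: qmul_op_def mult_n fun_eq_iff)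
  then have dim_K: "dim K = 1" using simple by (simp add: eig_multiplicity_def K_def)
  have "mult n u = 0" using u(3) by (simp add: mult_n)
  then have u_K: "u \<in> K" using u(1) unfolding K_def by (auto intro!: exI[of _ 1])
  obtain B where B: "finite B" "span B = UNIV" using finite_spanning_set by blast
  obtain Q m where Q: "(mult n ^^ m) (poly_eval n Q) = 0" "\<And>k. mpow (poly_eval n Q) k \<noteq> 0"
    using non_nilpotent_in_generalized_kernel[OF B \<open>mult n u = 0\<close> u(2)] by blast
  define e where "e = poly_eval n Q"
  have e_K: "e \<in> K" using Q(1) poly_eval_in_H0[OF n_H0] by (auto simp: K_def e_def)
  have "e \<noteq> 0" using Q(2)[of 1] by (simp add: e_def mpow_Suc mult_one)
  then obtain a where a: "u = sc a e" using dim_eq_1_proportional[OF dim_K u_K e_K] by blast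
  then have "a \<noteq> 0" using u(2) by auto
  then show ?thesis using Q(2)[of k] by (simp add: a e_def mpow_scale)
qed

lemma simple_eigenvalue_not_in_nonzero_degree:
  assumes simple: "eig_multiplicity sc (qmul_op mult c) (Hj 0) lam = 1" and "j \<noteq> 0"
  shows "\<not> is_eigenvalue_on sc (qmul_op mult c) (Hj j) lam"
proof
  assume "is_eigenvalue_on sc (qmul_op mult c) (Hj j) lam"
  then obtain v where v: "v \<in> Hj j" "v \<noteq> 0" "mult c v = sc lam v"
    by (auto simp: is_eigenvalue_on_def qmul_op_def)
  obtain w where w: "w \<in> Hj (- j)" "pair v w \<noteq> 0" using pairing_partner[OF v(1,2)] .
  define u where "u = mult v w"
  have u_H0: "u \<in> Hj 0" using mult_Hj[OF v(1) w(1)] by (simp add: u_def)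
  have "pair one u \<noteq> 0" using w(2) by (simp add: u_def pair_frobenius[symmetric] one_mult)
  then have "u \<noteq> 0" by auto
  have "mult c u = sc lam u" using v(3) by (simp add: u_def mult_assoc[symmetric] scale_mult)
  obtain k where "mpow v k = 0" using nilpotent_of_nonzero_degree[OF v(1) assms(2)] .
  moreover have "mpow u k = mult (mpow v k) (mpow w k)"
    unfolding u_def by (rule mpow_mult_distrib) (metis u_def u_H0 v(1) mpow_in_Hj mult_commute_H0)
  ultimately show False
    using simple_eigenvector_not_nilpotent[OF simple u_H0 \<open>u \<noteq> 0\<close> \<open>mult c u = sc lam u\<close>]
    by simp
qed

end

theorem mainTheorem20:
  fixes sc :: "complex \<Rightarrow> 'v::ab_group_add \<Rightarrow> 'v"
    and mult :: "'v \<Rightarrow> 'v \<Rightarrow> 'v" and one :: 'v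
    and pair :: "'v \<Rightarrow> 'v \<Rightarrow> complex" and Hj :: "int \<Rightarrow> 'v set"
    and c :: 'v and lam :: complex
  assumes "qcoh_data sc mult one pair Hj c"
    and "is_eigenvalue_on sc (qmul_op mult c) (Hj 0) lam"
    and "eig_multiplicity sc (qmul_op mult c) (Hj 0) lam = 1"
  shows "\<forall>j. j \<noteq> 0 \<longrightarrow> \<not> is_eigenvalue_on sc (qmul_op mult c) (Hj j) lam"
  using quantum_cohomology.simple_eigenvalue_not_in_nonzero_degree[OF
      quantum_cohomology.intro[OF assms(1)] assms(3)]
  by blast

end
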